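(* Let $A\in\mathbb{R}^{n\times n}$ and $C\in\mathbb{R}^{1\times n}$. Suppose there exist two eigenvalues $\lambda_p,\lambda_q$ of $A$ belonging to two different Jordan blocks of the Jordan form of $A$ and a positive integer $h$ such that $\lambda_p^h=\lambda_q^h$. Then for any $l\in\mathbb{N}$ and any positive integers $r_1,\ldots,r_l$, setting $t_i=r_ih$, the matrix with rows $CA^{t_1},\ldots,CA^{t_l}$ has rank less than $n$.
   Context: Setting: discrete-time single-output system $x(t+1)=Ax(t)+Bu(t)$, $y(t)=Cx(t)+Du(t)$ with output measured at selected time instances; the matrix with rows $CA^{t_1},\ldots,CA^{t_l}$ is the sample-based observability matrix. (For distinct nonzero $\lambda_p,\lambda_q$, the condition $\lambda_p^h=\lambda_q^h$ is equivalent to $|\lambda_p|=|\lambda_q|$ and $\pi/(\phi_q-\phi_p)=h/(2(k_q-k_p))$ for some distinct $k_p,k_q\in\{0,\ldots,h-1\}$, $\phi_i$ the phase of $\lambda_i$.) *)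

theory Defs
  imports "Jordan_Normal_Form.Jordan_Normal_Form" "Jordan_Normal_Form.DL_Rank_Submatrix"
begin

definition sample_obs_matrix :: "nat \<Rightarrow> real mat \<Rightarrow> real mat \<Rightarrow> nat list \<Rightarrow> real mat" where
  "sample_obs_matrix n A C ts = mat_of_rows n (map (\<lambda>t. row (C * A ^\<^sub>m t) 0) ts)"

end

theory Submission
  imports Defs
begin

(* Let mu = lambda_p^h = lambda_q^h and take eigenvectors v, w of A from the two Jordan blocks
   (images of the first unit vectors of the blocks under the similarity).  They are linearly
   independent, and every combination u = c v + d w satisfies A^(r h) u = mu^r u.  As C is a
   single row, some nonzero such u has C u = 0, hence C A^(r h) u = 0 for all r.  The real or
   imaginary part of u is then a nonzero real vector in the kernel of the sample-based
   observability matrix, so its rank is less than n. *)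

lemma (in vec_space) non_distinct_cols_low_rank:
  assumes "A \<in> carrier_mat n nc" and "\<not> distinct (cols A)"
  shows "rank A < nc"
proof -
  obtain S where S: "maximal S (\<lambda>T. T \<subseteq> set (cols A) \<and> lin_indpt T)"
    using maximal_exists[of "\<lambda>T. T \<subseteq> set (cols A) \<and> lin_indpt T" "card (set (cols A))" "{}"]
    by (meson List.finite_set card_mono empty_iff empty_subsetI finite_lin_indpt2 rev_finite_subset)
  then have "card S \<le> card (set (cols A))" by (simp add: card_mono maximal_def)
  also have "\<dots> < nc"
    using assms card_distinct card_length cols_length carrier_matD(2) nat_less_le by metis
  finally show ?thesis using rank_card_indpt[OF assms(1) S] by simp
qed

lemma (in vec_space) nonzero_kernel_vec_low_rank:
  assumes A: "A \<in> carrier_mat n nc"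
    and v: "v \<in> carrier_vec nc" "v \<noteq> 0\<^sub>v nc" "A *\<^sub>v v = 0\<^sub>v n"
  shows "rank A < nc"
proof (cases "distinct (cols A)")
  case True
  have "rank A \<noteq> nc"
    using full_rank_lin_indpt[OF A _ True] lin_depI[OF A v True] by blast
  then show ?thesis using rank_le_nc[OF A] by linarith
qed (use non_distinct_cols_low_rank[OF A] in blast)

lemma sum_list_take_strict_mono:
  fixes xs :: "nat list"
  assumes "0 \<notin> set xs" and "i < j" and "j \<le> length xs"
  shows "sum_list (take i xs) < sum_list (take j xs)"
  using assms(2,3)
proof (induction j)
  case (Suc j)
  have "xs ! j \<noteq> 0" using assms(1) Suc.prems by (metis Suc_le_lessD nth_mem)
  then have "sum_list (take j xs) < sum_list (take (Suc j) xs)"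
    using Suc.prems by (simp add: take_Suc_conv_app_nth)
  then show ?case using Suc by (cases "i = j") auto
qed simp

definition jordan_block_start :: "(nat \<times> 'a) list \<Rightarrow> nat \<Rightarrow> nat" where
  "jordan_block_start n_as i = sum_list (map fst (take i n_as))"

lemma jordan_block_start_0 [simp]: "jordan_block_start n_as 0 = 0"
  and jordan_block_start_Cons_Suc [simp]:
    "jordan_block_start ((m, a) # n_as) (Suc i) = m + jordan_block_start n_as i"
  unfolding jordan_block_start_def by simp_all

lemma jordan_block_start_less:
  assumes "0 \<notin> fst ` set n_as" and "i < length n_as"
  shows "jordan_block_start n_as i < sum_list (map fst n_as)"
  using sum_list_take_strict_mono[of "map fst n_as" i "length n_as"] assms
  unfolding jordan_block_start_def by (simp add: take_map)

lemma jordan_block_start_inj: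
  assumes "0 \<notin> fst ` set n_as" and "i < length n_as" and "j < length n_as" and "i \<noteq> j"
  shows "jordan_block_start n_as i \<noteq> jordan_block_start n_as j"
  using sum_list_take_strict_mono[of "map fst n_as" i j] sum_list_take_strict_mono[of "map fst n_as" j i]
    assms unfolding jordan_block_start_def by (cases "i < j") (auto simp: take_map)

lemma jordan_matrix_block_start_col:
  assumes "0 \<notin> fst ` set n_as" and "i < length n_as" and "k < sum_list (map fst n_as)"
  shows "jordan_matrix n_as $$ (k, jordan_block_start n_as i) =
    (if k = jordan_block_start n_as i then snd (n_as ! i) else 0)"
  using assms
proof (induction n_as arbitrary: i k)
  case (Cons mb n_as)
  obtain m b where mb: "mb = (m, b)" by force
  have "m > 0" using Cons.prems mb by auto
  note J = jordan_matrix_Cons[of m b n_as]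
  show ?case
  proof (cases i)
    case 0
    then show ?thesis using Cons.prems \<open>m > 0\<close> unfolding mb J by (auto simp: jordan_block_def)
  next
    case (Suc i')
    have "jordan_block_start n_as i' < sum_list (map fst n_as)"
      using jordan_block_start_less Cons.prems Suc by auto
    then show ?thesis
      using Cons.IH[of i' "k - m"] Cons.prems Suc unfolding mb J by auto
  qed
qed simp

lemma jordan_matrix_block_start_eigen:
  fixes n_as :: "(nat \<times> 'a :: field) list"
  assumes "0 \<notin> fst ` set n_as" and "i < length n_as"
  defines "e \<equiv> unit_vec (sum_list (map fst n_as)) (jordan_block_start n_as i)"
  shows "jordan_matrix n_as *\<^sub>v e = snd (n_as ! i) \<cdot>\<^sub>v e"
proof (rule eq_vecI)
  let ?s = "jordan_block_start n_as i" and ?N = "sum_list (map fst n_as)"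
  have s: "?s < ?N" using jordan_block_start_less[OF assms(1,2)] .
  fix k assume "k < dim_vec (snd (n_as ! i) \<cdot>\<^sub>v e)"
  then have k: "k < ?N" by (simp add: e_def)
  have "(jordan_matrix n_as *\<^sub>v e) $ k = row (jordan_matrix n_as) k $ ?s"
    using k s by (simp add: e_def scalar_prod_right_unit)
  also have "\<dots> = (snd (n_as ! i) \<cdot>\<^sub>v e) $ k"
    using jordan_matrix_block_start_col[OF assms(1,2) k] k s by (auto simp: e_def)
  finally show "(jordan_matrix n_as *\<^sub>v e) $ k = (snd (n_as ! i) \<cdot>\<^sub>v e) $ k" .
qed (simp add: e_def)

lemma similar_mat_wit_eigen:
  fixes A :: "'a :: field mat"
  assumes sim: "similar_mat_wit A B P Q" and A: "A \<in> carrier_mat n n"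
    and v: "v \<in> carrier_vec n" and Bv: "B *\<^sub>v v = a \<cdot>\<^sub>v v"
  shows "A *\<^sub>v (P *\<^sub>v v) = a \<cdot>\<^sub>v (P *\<^sub>v v)"
proof -
  note wit = similar_mat_witD2[OF A sim]
  have "A *\<^sub>v (P *\<^sub>v v) = (P * B) *\<^sub>v (Q *\<^sub>v (P *\<^sub>v v))"
    unfolding wit(3) by (rule assoc_mult_mat_vec) (use wit v in auto)
  also have "Q *\<^sub>v (P *\<^sub>v v) = v"
    using wit v by (simp add: assoc_mult_mat_vec[of Q n n P n, symmetric])
  also have "(P * B) *\<^sub>v v = P *\<^sub>v (a \<cdot>\<^sub>v v)"
    using wit v Bv by (simp add: assoc_mult_mat_vec)
  also have "\<dots> = a \<cdot>\<^sub>v (P *\<^sub>v v)"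
    using mult_mat_vec[OF wit(6) v] .
  finally show ?thesis .
qed

lemma jordan_nf_independent_eigenvectors:
  fixes A :: "'a :: field mat"
  assumes A: "A \<in> carrier_mat n n" and jnf: "jordan_nf A n_as"
    and ij: "i < length n_as" "j < length n_as" "i \<noteq> j"
  obtains v w where "v \<in> carrier_vec n" "w \<in> carrier_vec n"
    "A *\<^sub>v v = snd (n_as ! i) \<cdot>\<^sub>v v" "A *\<^sub>v w = snd (n_as ! j) \<cdot>\<^sub>v w"
    "\<And>a b. a \<cdot>\<^sub>v v + b \<cdot>\<^sub>v w = 0\<^sub>v n \<Longrightarrow> a = 0 \<and> b = 0"
proof -
  from jnf obtain P Q where nz: "0 \<notin> fst ` set n_as"
    and sim: "similar_mat_wit A (jordan_matrix n_as) P Q"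
    unfolding jordan_nf_def similar_mat_def by blast
  note wit = similar_mat_witD2[OF A sim]
  have N: "sum_list (map fst n_as) = n" using wit(5) by auto
  let ?s = "jordan_block_start n_as"
  define e :: "nat \<Rightarrow> 'a vec" where "e k = unit_vec n (?s k)" for k
  have e: "e k \<in> carrier_vec n" for k by (simp add: e_def)
  have s: "?s i < n" "?s j < n" "?s i \<noteq> ?s j"
    using jordan_block_start_less[OF nz] jordan_block_start_inj[OF nz ij] ij N by auto
  have Av: "A *\<^sub>v (P *\<^sub>v e k) = snd (n_as ! k) \<cdot>\<^sub>v (P *\<^sub>v e k)" if "k < length n_as" for k
    using similar_mat_wit_eigen[OF sim A e] jordan_matrix_block_start_eigen[OF nz that] N
    by (simp add: e_def)
  have indep: "a = 0 \<and> b = 0" if comb: "a \<cdot>\<^sub>v (P *\<^sub>v e i) + b \<cdot>\<^sub>v (P *\<^sub>v e j) = 0\<^sub>v n" for a b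
  proof -
    have "a \<cdot>\<^sub>v e i + b \<cdot>\<^sub>v e j = Q *\<^sub>v (P *\<^sub>v (a \<cdot>\<^sub>v e i + b \<cdot>\<^sub>v e j))"
      using wit e by (simp add: assoc_mult_mat_vec[of Q n n P n, symmetric])
    also have "P *\<^sub>v (a \<cdot>\<^sub>v e i + b \<cdot>\<^sub>v e j) = 0\<^sub>v n"
      using comb wit e by (simp add: mult_add_distrib_mat_vec mult_mat_vec)
    also have "Q *\<^sub>v 0\<^sub>v n = 0\<^sub>v n" using wit(7) by auto
    finally have "(a \<cdot>\<^sub>v e i + b \<cdot>\<^sub>v e j) $ ?s i = 0" "(a \<cdot>\<^sub>v e i + b \<cdot>\<^sub>v e j) $ ?s j = 0"
      using s by simp_all
    then show ?thesis using s by (simp add: e_def)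
  qed
  show thesis
    using that[OF mult_mat_vec_carrier[OF wit(6) e] mult_mat_vec_carrier[OF wit(6) e] Av Av indep] ij
    by blast
qed

lemma exists_nontrivial_zero_combination:
  fixes x y :: "'a :: field"
  obtains c d where "(c, d) \<noteq> (0, 0)" and "c * x + d * y = 0"
proof (cases "x = 0 \<and> y = 0")
  case True
  then show thesis using that[of 1 0] by simp
next
  case False
  then show thesis using that[of y "- x"] by (auto simp: mult.commute)
qed

lemma equal_power_eigenvalues_kernel_vec:
  fixes A C :: "'a :: field mat"
  assumes A: "A \<in> carrier_mat n n" and C: "C \<in> carrier_mat 1 n"
    and v: "v \<in> carrier_vec n" "A *\<^sub>v v = \<alpha> \<cdot>\<^sub>v v"
    and w: "w \<in> carrier_vec n" "A *\<^sub>v w = \<beta> \<cdot>\<^sub>v w"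
    and indep: "\<And>a b. a \<cdot>\<^sub>v v + b \<cdot>\<^sub>v w = 0\<^sub>v n \<Longrightarrow> a = 0 \<and> b = 0"
    and pow: "\<alpha> ^ h = \<beta> ^ h"
  obtains u where "u \<in> carrier_vec n" "u \<noteq> 0\<^sub>v n" "\<And>r. (C * A ^\<^sub>m (r * h)) *\<^sub>v u = 0\<^sub>v 1"
proof -
  obtain c d where cd: "(c, d) \<noteq> (0, 0)" "c * (C *\<^sub>v v) $ 0 + d * (C *\<^sub>v w) $ 0 = 0"
    using exists_nontrivial_zero_combination by metis
  define u where "u = c \<cdot>\<^sub>v v + d \<cdot>\<^sub>v w"
  have u: "u \<in> carrier_vec n" using v w by (simp add: u_def)
  have "u \<noteq> 0\<^sub>v n" using indep cd(1) by (auto simp: u_def)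
  have "1 \<cdot>\<^sub>v v + 0 \<cdot>\<^sub>v w = v" "0 \<cdot>\<^sub>v v + 1 \<cdot>\<^sub>v w = w" using v w by auto
  then have "v \<noteq> 0\<^sub>v n" "w \<noteq> 0\<^sub>v n" using indep[of 1 0] indep[of 0 1] by auto
  then have eig: "eigenvector A v \<alpha>" "eigenvector A w \<beta>"
    using A v w by (auto simp: eigenvector_def)
  have Cu: "C *\<^sub>v u = 0\<^sub>v 1"
  proof (rule eq_vecI)
    show "(C *\<^sub>v u) $ k = 0\<^sub>v 1 $ k" if "k < dim_vec (0\<^sub>v 1 :: 'a vec)" for k
      using that cd(2) C v w
      by (simp add: u_def mult_add_distrib_mat_vec[OF C] mult_mat_vec[OF C])
  qed (use C in simp)
  have "(C * A ^\<^sub>m (r * h)) *\<^sub>v u = 0\<^sub>v 1" for r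
  proof -
    have Ar: "A ^\<^sub>m (r * h) \<in> carrier_mat n n" using A by simp
    have "A ^\<^sub>m (r * h) *\<^sub>v v = (\<alpha> ^ h) ^ r \<cdot>\<^sub>v v" "A ^\<^sub>m (r * h) *\<^sub>v w = (\<alpha> ^ h) ^ r \<cdot>\<^sub>v w"
      using eigenvector_pow[OF A eig(1), of "r * h"] eigenvector_pow[OF A eig(2), of "r * h"] pow
      by (simp_all add: power_mult mult.commute[of r h])
    then have "A ^\<^sub>m (r * h) *\<^sub>v u = c \<cdot>\<^sub>v ((\<alpha> ^ h) ^ r \<cdot>\<^sub>v v) + d \<cdot>\<^sub>v ((\<alpha> ^ h) ^ r \<cdot>\<^sub>v w)"
      using v w unfolding u_def by (simp add: mult_add_distrib_mat_vec[OF Ar] mult_mat_vec[OF Ar])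
    also have "\<dots> = (\<alpha> ^ h) ^ r \<cdot>\<^sub>v u"
      using v w unfolding u_def
      by (simp add: smult_add_distrib_vec[of _ n] smult_smult_assoc mult.commute)
    finally have "A ^\<^sub>m (r * h) *\<^sub>v u = (\<alpha> ^ h) ^ r \<cdot>\<^sub>v u" .
    then have "(C * A ^\<^sub>m (r * h)) *\<^sub>v u = (\<alpha> ^ h) ^ r \<cdot>\<^sub>v (C *\<^sub>v u)"
      using assoc_mult_mat_vec[OF C Ar u] mult_mat_vec[OF C u] by simp
    then show ?thesis using Cu by (auto intro!: eq_vecI)
  qed
  then show thesis using that u \<open>u \<noteq> 0\<^sub>v n\<close> by blast
qed

lemma of_real_mat_mult_vec_Re_Im:
  fixes M :: "real mat" and w :: "complex vec"
  assumes "dim_col M = dim_vec w"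
  shows "map_vec Re (map_mat complex_of_real M *\<^sub>v w) = M *\<^sub>v map_vec Re w"
    and "map_vec Im (map_mat complex_of_real M *\<^sub>v w) = M *\<^sub>v map_vec Im w"
  using assms by (auto intro!: eq_vecI simp: scalar_prod_def Re_sum Im_sum)

lemma real_kernel_vec_of_complex:
  fixes w :: "complex vec"
  assumes w: "w \<in> carrier_vec n" "w \<noteq> 0\<^sub>v n"
  obtains x :: "real vec" where "x \<in> carrier_vec n" "x \<noteq> 0\<^sub>v n"
    "\<And>M. M \<in> carrier_mat m n \<Longrightarrow> map_mat complex_of_real M *\<^sub>v w = 0\<^sub>v m \<Longrightarrow> M *\<^sub>v x = 0\<^sub>v m"
proof -
  define x where "x = (if map_vec Re w \<noteq> 0\<^sub>v n then map_vec Re w else map_vec Im w)"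
  have x: "x \<in> carrier_vec n" using w(1) by (simp add: x_def)
  have x0: "x \<noteq> 0\<^sub>v n"
  proof
    assume "x = 0\<^sub>v n"
    then have "map_vec Re w = 0\<^sub>v n" "map_vec Im w = 0\<^sub>v n"
      by (auto simp: x_def split: if_splits)
    then have "Re (w $ k) = 0 \<and> Im (w $ k) = 0" if "k < n" for k
      using that w(1) by (metis index_map_vec(1) index_zero_vec(1) carrier_vecD)
    then have "w = 0\<^sub>v n"
      using w(1) by (auto intro!: eq_vecI complex_eqI)
    then show False using w(2) by simp
  qed
  have "M *\<^sub>v x = 0\<^sub>v m"
    if "M \<in> carrier_mat m n" "map_mat complex_of_real M *\<^sub>v w = 0\<^sub>v m" for M
  proof -
    have "map_vec f (0\<^sub>v m) = 0\<^sub>v m" if "f 0 = 0" for f :: "complex \<Rightarrow> real"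
      using that by (intro eq_vecI) auto
    then show ?thesis using of_real_mat_mult_vec_Re_Im[of M w] that w(1) by (auto simp: x_def)
  qed
  then show thesis using that[OF x x0] by blast
qed

lemma sample_obs_matrix_carrier: "sample_obs_matrix n A C ts \<in> carrier_mat (length ts) n"
  unfolding sample_obs_matrix_def using mat_of_rows_carrier(1) length_map by metis

lemma sample_obs_matrix_mult_vec_eq_0:
  assumes A: "A \<in> carrier_mat n n" and C: "C \<in> carrier_mat 1 n" and x: "x \<in> carrier_vec n"
    and ker: "\<And>t. t \<in> set ts \<Longrightarrow> (C * A ^\<^sub>m t) *\<^sub>v x = 0\<^sub>v 1"
  shows "sample_obs_matrix n A C ts *\<^sub>v x = 0\<^sub>v (length ts)"
proof (rule eq_vecI)
  fix k assume "k < dim_vec (0\<^sub>v (length ts) :: real vec)"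
  then have k: "k < length ts" by simp
  have "row (C * A ^\<^sub>m (ts ! k)) 0 \<in> carrier_vec n" using A C by (simp add: row_def)
  then have "row (sample_obs_matrix n A C ts) k = row (C * A ^\<^sub>m (ts ! k)) 0"
    unfolding sample_obs_matrix_def using k by (simp add: mat_of_rows_row)
  then have "(sample_obs_matrix n A C ts *\<^sub>v x) $ k = ((C * A ^\<^sub>m (ts ! k)) *\<^sub>v x) $ 0"
    using k A C sample_obs_matrix_carrier[of n A C ts] by simp
  then show "(sample_obs_matrix n A C ts *\<^sub>v x) $ k = 0\<^sub>v (length ts) $ k"
    using ker[of "ts ! k"] k by simp
qed (use sample_obs_matrix_carrier[of n A C ts] in auto)

theorem lemma2:
  fixes A C :: "real mat" and n h :: nat and n_as :: "(nat \<times> complex) list"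
    and i j :: nat and rs :: "nat list"
  assumes A: "A \<in> carrier_mat n n" and C: "C \<in> carrier_mat 1 n"
    and jnf: "jordan_nf (map_mat complex_of_real A) n_as"
    and ij: "i < length n_as" "j < length n_as" "i \<noteq> j"
    and h: "h > 0"
    and pow: "(snd (n_as ! i)) ^ h = (snd (n_as ! j)) ^ h"
    and rs: "\<forall>r \<in> set rs. r > 0"
  shows "vec_space.rank (length rs) (sample_obs_matrix n A C (map (\<lambda>r. r * h) rs)) < n"
proof -
  let ?A = "map_mat complex_of_real A" and ?C = "map_mat complex_of_real C"
  have cA: "?A \<in> carrier_mat n n" and cC: "?C \<in> carrier_mat 1 n" using A C by auto
  obtain v w where "v \<in> carrier_vec n" "w \<in> carrier_vec n"
    "?A *\<^sub>v v = snd (n_as ! i) \<cdot>\<^sub>v v" "?A *\<^sub>v w = snd (n_as ! j) \<cdot>\<^sub>v w"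
    "\<And>a b. a \<cdot>\<^sub>v v + b \<cdot>\<^sub>v w = 0\<^sub>v n \<Longrightarrow> a = 0 \<and> b = 0"
    using jordan_nf_independent_eigenvectors[OF cA jnf ij] by blast
  then obtain u where u: "u \<in> carrier_vec n" "u \<noteq> 0\<^sub>v n"
    and Cu: "\<And>r. (?C * ?A ^\<^sub>m (r * h)) *\<^sub>v u = 0\<^sub>v 1"
    using equal_power_eigenvalues_kernel_vec[OF cA cC _ _ _ _ _ pow] by metis
  obtain x where x: "x \<in> carrier_vec n" "x \<noteq> 0\<^sub>v n"
    and ker: "\<And>M. M \<in> carrier_mat 1 n \<Longrightarrow> map_mat complex_of_real M *\<^sub>v u = 0\<^sub>v 1 \<Longrightarrow> M *\<^sub>v x = 0\<^sub>v 1"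
    using real_kernel_vec_of_complex[OF u] by metis
  have rows: "(C * A ^\<^sub>m t) *\<^sub>v x = 0\<^sub>v 1" if t_in: "t \<in> set (map (\<lambda>r. r * h) rs)" for t
  proof -
    obtain r where t: "t = r * h" using t_in by auto
    have "map_mat complex_of_real (C * A ^\<^sub>m t) = ?C * ?A ^\<^sub>m t"
      by (simp only: of_real_hom.mat_hom_mult[OF C pow_carrier_mat[OF A]] of_real_hom.mat_hom_pow[OF A])
    then show ?thesis using ker[of "C * A ^\<^sub>m t"] Cu[of r] A C t by simp
  qed
  let ?O = "sample_obs_matrix n A C (map (\<lambda>r. r * h) rs)"
  have "?O *\<^sub>v x = 0\<^sub>v (length (map (\<lambda>r. r * h) rs))"
    by (rule sample_obs_matrix_mult_vec_eq_0[OF A C x(1) rows])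
  moreover have "?O \<in> carrier_mat (length rs) n"
    using sample_obs_matrix_carrier[of n A C "map (\<lambda>r. r * h) rs"] by simp
  ultimately show ?thesis using vec_space.nonzero_kernel_vec_low_rank[OF _ x] by simp
qed

end
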